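(* Let $d \ge 2$, $\mu \in \mathbb{S}^{d-1}$, $\kappa \ge 0$, let $X$ follow the Power Spherical distribution with direction $\mu$ and concentration $\kappa$, and let $T=\mu^\top X$. Set $\alpha = \frac{d-1}{2}+\kappa$, $\beta=\frac{d-1}{2}$. Then the cumulative distribution function of $T$ is $F(t;\kappa,d) = I_{\frac{t+1}{2}}(\alpha,\beta)$ for $t\in[-1,1]$, and its inverse is $F^{-1}(y;\kappa,d) = 2\, I^{-1}_y(\alpha,\beta) - 1$ for $y \in [0,1]$, where $I^{-1}_y(\alpha,\beta)$ denotes the inverse of $x \mapsto I_x(\alpha,\beta)$ evaluated at $y$.
   Context: The Power Spherical distribution with direction $\mu\in\mathbb{S}^{d-1}$ and concentration $\kappa\ge 0$ is the probability distribution on $\mathbb{S}^{d-1}=\{x\in\mathbb{R}^d:\|x\|_2=1\}$ with density (w.r.t. surface measure) proportional to $(1+\mu^\top x)^\kappa$. $I_x(a,b) = B_x(a,b)/B(a,b)$ is the regularized incomplete Beta function, with $B_x(a,b)=\int_0^x u^{a-1}(1-u)^{b-1}\,du$ and $B(a,b)=\Gamma(a)\Gamma(b)/\Gamma(a+b)$. *)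

theory Defs
  imports "HOL-Analysis.Analysis"
begin

text \<open>Surface (Hausdorff) measure on the unit sphere of a Euclidean space, defined as
  the cone measure: sigma(A) = d * lambda({r x | 0 < r <= 1, x in A}), i.e. d times the
  push-forward of Lebesgue measure on the punctured unit ball under x |-> x/|x|.\<close>
definition sphere_surface_measure :: "'a::euclidean_space measure" where
  "sphere_surface_measure =
     density (distr (restrict_space lborel (ball 0 1 - {0}))
                    (restrict_space borel (sphere 0 1))
                    (\<lambda>x. x /\<^sub>R norm x))
             (\<lambda>_. ennreal (real DIM('a)))"

text \<open>Unnormalised Power Spherical density (1 + mu^T x)^kappa, with 0^0 = 1.\<close>
definition ps_unnorm :: "'a::euclidean_space \<Rightarrow> real \<Rightarrow> 'a \<Rightarrow> real" where
  "ps_unnorm \<mu> \<kappa> x = (if \<kappa> = 0 then 1 else (1 + \<mu> \<bullet> x) powr \<kappa>)"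

definition power_spherical :: "'a::euclidean_space \<Rightarrow> real \<Rightarrow> 'a measure" where
  "power_spherical \<mu> \<kappa> =
     density sphere_surface_measure
       (\<lambda>x. ennreal (ps_unnorm \<mu> \<kappa> x /
                      integral\<^sup>L sphere_surface_measure (ps_unnorm \<mu> \<kappa>)))"

definition inc_beta :: "real \<Rightarrow> real \<Rightarrow> real \<Rightarrow> real" where
  "inc_beta x a b = (LBINT u=0..x. u powr (a - 1) * (1 - u) powr (b - 1)) / Beta a b"

definition inc_beta_inv :: "real \<Rightarrow> real \<Rightarrow> real \<Rightarrow> real" where
  "inc_beta_inv y a b = (THE x. x \<in> {0..1} \<and> inc_beta x a b = y)"

end

theory Submission
  imports Defs
begin

text \<open>The Power Spherical density depends on \<open>x\<close> only through \<open>T = \<mu> \<bullet> x\<close>. Rotating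
  \<open>\<mu>\<close> onto a basis vector and writing the surface measure as the cone measure over the
  punctured unit ball, Fubini along that basis vector and the substitution
  \<open>u = s / sqrt (s\<^sup>2 + |y|\<^sup>2)\<close> show that \<open>T\<close> has density proportional to
  \<open>(1 + u) powr \<kappa> * (1 - u\<^sup>2) powr ((d - 3) / 2) = (1 + u) powr (\<alpha> - 1) * (1 - u) powr (\<beta> - 1)\<close>
  on \<open>(-1, 1)\<close>; the dimensional constant cancels in the normalisation. The substitution
  \<open>u = 2 v - 1\<close> turns the distribution function into \<open>inc_beta ((t + 1) / 2) \<alpha> \<beta>\<close>,
  and since \<open>x \<mapsto> inc_beta x \<alpha> \<beta>\<close> is a continuous strictly increasing bijection of
  \<open>[0, 1]\<close>, the quantile function is \<open>2 * inc_beta_inv y \<alpha> \<beta> - 1\<close>.\<close>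

section \<open>Rotation invariance of Lebesgue measure\<close>

text \<open>A copy of a finite type carrying a well-order: the volume results of
  \<open>Change_Of_Vars\<close> are stated only for index types of class \<open>wellorder\<close>.\<close>

typedef ('a::finite) fin_index = "{..<CARD('a)}"
  morphisms index_nat index_of_nat
  by (rule exI[of _ 0]) simp

instance fin_index :: (finite) finite
proof
  have "(UNIV :: 'a fin_index set) = index_of_nat ` {..<CARD('a)}"
    by (rule type_definition.Abs_image[OF type_definition_fin_index, symmetric])
  then show "finite (UNIV :: 'a fin_index set)" by (metis finite_imageI finite_lessThan)
qed

instantiation fin_index :: (finite) linorder
begin
definition less_eq_fin_index :: "'a fin_index \<Rightarrow> 'a fin_index \<Rightarrow> bool"
  where "less_eq_fin_index i j \<longleftrightarrow> index_nat i \<le> index_nat j"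
definition less_fin_index :: "'a fin_index \<Rightarrow> 'a fin_index \<Rightarrow> bool"
  where "less_fin_index i j \<longleftrightarrow> index_nat i < index_nat j"
instance by standard (auto simp: less_eq_fin_index_def less_fin_index_def index_nat_inject)
end

instance fin_index :: (finite) wellorder
proof
  fix P :: "'a fin_index \<Rightarrow> bool" and i
  assume step: "\<And>i. (\<And>j. j < i \<Longrightarrow> P j) \<Longrightarrow> P i"
  have "\<forall>i. index_nat i = n \<longrightarrow> P i" for n
  proof (induction n rule: less_induct)
    case (less n)
    then show ?case using step by (auto simp: less_fin_index_def)
  qed
  then show "P i" by blast
qed

lemma card_fin_index: "CARD('a::finite fin_index) = CARD('a)"
  using type_definition.card[OF type_definition_fin_index] by simp

lemma prod_Basis_vec: "(\<Prod>b\<in>(Basis :: (real^'n) set). f b) = (\<Prod>i\<in>UNIV. f (axis i 1))"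
proof -
  have Basis: "(Basis :: (real^'n) set) = (\<lambda>i. axis i 1) ` UNIV"
    by (auto simp: Basis_vec_def)
  have "inj (\<lambda>i::'n. axis i (1::real))"
    by (auto intro!: injI simp: axis_eq_axis)
  then show ?thesis unfolding Basis by (simp add: prod.reindex)
qed

lemma inner_vec_permute:
  fixes \<pi> :: "'m::finite \<Rightarrow> 'n::finite"
  assumes "bij \<pi>"
  shows "((\<chi> j. x $ \<pi> j) :: real^'m) \<bullet> (\<chi> j. y $ \<pi> j) = x \<bullet> y"
  unfolding inner_vec_def using sum.reindex_bij_betw[OF assms, of "\<lambda>i. x $ i \<bullet> y $ i"] by simp

lemma lborel_distr_vec_permute:
  fixes \<pi> :: "'m::finite \<Rightarrow> 'n::finite"
  assumes bij: "bij \<pi>"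
  shows "distr lborel borel (\<lambda>x::real^'n. (\<chi> j. x $ \<pi> j) :: real^'m) = lborel"
proof (rule lborel_eqI[symmetric])
  let ?P = "\<lambda>x::real^'n. (\<chi> j. x $ \<pi> j) :: real^'m"
  let ?Q = "\<lambda>z::real^'m. (\<chi> i. z $ inv \<pi> i) :: real^'n"
  have [measurable]: "?P \<in> borel_measurable borel"
    by (intro borel_measurable_continuous_onI continuous_intros)
  fix l u :: "real^'m"
  assume le: "\<And>b. b \<in> Basis \<Longrightarrow> l \<bullet> b \<le> u \<bullet> b"
  have le': "l $ j \<le> u $ j" for j using le[of "axis j 1"] by (simp add: cart_eq_inner_axis)
  have "?P -` box l u = box (?Q l) (?Q u)"
    using bij by (auto simp: mem_box_cart bij_inv_eq_iff) (metis bij bij_inv_eq_iff)+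
  then have "emeasure (distr lborel borel ?P) (box l u) = emeasure lborel (box (?Q l) (?Q u))"
    by (simp add: emeasure_distr)
  also have "\<dots> = (\<Prod>b\<in>Basis. (?Q u - ?Q l) \<bullet> b)"
    using le' by (intro emeasure_lborel_box) (auto simp: cart_eq_inner_axis[symmetric] Basis_vec_def)
  also have "\<dots> = (\<Prod>i\<in>UNIV. u $ inv \<pi> i - l $ inv \<pi> i)"
    unfolding prod_Basis_vec by (simp add: cart_eq_inner_axis[symmetric])
  also have "\<dots> = (\<Prod>j\<in>UNIV. u $ j - l $ j)"
    using prod.reindex_bij_betw[OF bij_betw_inv_into[OF bij], of "\<lambda>j. u $ j - l $ j"]
    by (simp add: bij_betw_def)
  finally show "emeasure (distr lborel borel ?P) (box l u) = (\<Prod>b\<in>Basis. (u - l) \<bullet> b)"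
    by (simp add: prod_Basis_vec cart_eq_inner_axis[symmetric])
qed simp

lemma borel_measurable_orthogonal_transformation:
  fixes Q :: "'a::euclidean_space \<Rightarrow> 'a"
  assumes "orthogonal_transformation Q"
  shows "Q \<in> borel_measurable borel"
  by (intro borel_measurable_continuous_onI linear_continuous_on)
    (simp add: assms orthogonal_transformation_linear flip: linear_conv_bounded_linear)

lemma lborel_distr_orthogonal_transformation_wellorder:
  fixes Q :: "real^'m::{finite,wellorder} \<Rightarrow> real^'m::_"
  assumes Q: "orthogonal_transformation Q"
  shows "distr lborel borel Q = lborel"
proof (rule lborel_eqI[symmetric])
  obtain Q' where Q': "orthogonal_transformation Q'" "Q' \<circ> Q = id" "Q \<circ> Q' = id"
    using orthogonal_transformation_inv Q
    by (metis orthogonal_transformation_bij bij_is_inj bij_is_surj inv_o_cancel surj_iff)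
  fix l u :: "real^'m::{finite,wellorder}"
  assume "\<And>b. b \<in> Basis \<Longrightarrow> l \<bullet> b \<le> u \<bullet> b"
  then have vol: "emeasure lborel (box l u) = (\<Prod>b\<in>Basis. (u - l) \<bullet> b)"
    by simp
  have pre: "Q -` box l u = Q' ` box l u"
    using Q' by (auto simp: fun_eq_iff) (metis image_eqI)
  have "open (Q -` box l u)"
    using Q by (intro continuous_open_vimage open_box linear_continuous_at
        linear_conv_bounded_linear[THEN iffD1] orthogonal_transformation_linear)
  moreover have "Q \<in> borel_measurable borel"
    using Q by (rule borel_measurable_orthogonal_transformation)
  ultimately have "emeasure (distr lborel borel Q) (box l u) = emeasure lebesgue (Q' ` box l u)"
    by (simp add: emeasure_distr pre emeasure_completion borel_open)
  also have "\<dots> = ennreal (measure lebesgue (box l u))"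
    using measurable_orthogonal_image[OF Q'(1)] measure_orthogonal_image[OF Q'(1)]
    by (simp add: emeasure_eq_measure2)
  also have "\<dots> = emeasure lborel (box l u)"
    by (simp add: emeasure_eq_measure2 emeasure_completion)
  finally show "emeasure (distr lborel borel Q) (box l u) = (\<Prod>b\<in>Basis. (u - l) \<bullet> b)"
    using vol by simp
qed simp

lemma lborel_distr_orthogonal_transformation:
  fixes Q :: "real^'n \<Rightarrow> real^'n"
  assumes Q: "orthogonal_transformation Q"
  shows "distr lborel borel Q = lborel"
proof -
  obtain \<pi> :: "'n fin_index \<Rightarrow> 'n" where bij: "bij \<pi>"
    using finite_same_card_bij[of "UNIV :: 'n fin_index set" "UNIV :: 'n set"] card_fin_index
    by auto
  then have bij': "bij (inv \<pi>)" by (simp add: bij_imp_bij_inv)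
  define P where "P = (\<lambda>x::real^'n. (\<chi> j. x $ \<pi> j) :: real^'n fin_index)"
  define P' where "P' = (\<lambda>z::real^'n fin_index. (\<chi> i. z $ inv \<pi> i) :: real^'n)"
  have [measurable]: "P \<in> borel_measurable borel" "P' \<in> borel_measurable borel"
    unfolding P_def P'_def by (intro borel_measurable_continuous_onI continuous_intros)+
  define Q' where "Q' = P \<circ> Q \<circ> P'"
  have Q'_orth: "orthogonal_transformation Q'"
    unfolding orthogonal_transformation_def
  proof (intro conjI allI)
    have "linear P" "linear P'"
      unfolding P_def P'_def by (auto intro!: linearI simp: vec_eq_iff)
    then show "linear Q'"
      unfolding Q'_def using orthogonal_transformation_linear[OF Q] by (intro linear_compose)
    show "Q' v \<bullet> Q' w = v \<bullet> w" for v w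
      unfolding Q'_def comp_def P_def P'_def
      using inner_vec_permute[OF bij] inner_vec_permute[OF bij'] Q
      by (simp add: orthogonal_transformation_def)
  qed
  have "P' (P x) = x" for x
    using bij by (simp add: P_def P'_def vec_eq_iff bij_is_surj surj_f_inv_f)
  then have "Q = P' \<circ> Q' \<circ> P" unfolding Q'_def by (simp add: fun_eq_iff)
  moreover have [measurable]: "Q \<in> borel_measurable borel" "Q' \<in> borel_measurable borel"
    using Q Q'_orth by (simp_all add: borel_measurable_orthogonal_transformation)
  ultimately have "distr lborel borel Q = distr (distr (distr lborel borel P) borel Q') borel P'"
    by (simp add: distr_distr comp_assoc)
  also have "\<dots> = lborel"
    unfolding P_def P'_def lborel_distr_vec_permute[OF bij]
      lborel_distr_orthogonal_transformation_wellorder[OF Q'_orth] lborel_distr_vec_permute[OF bij'] ..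
  finally show ?thesis .
qed

section \<open>Integrals over the punctured unit ball\<close>

lemma norm_sum_Basis_power2:
  fixes f :: "'a::euclidean_space \<Rightarrow> real"
  shows "norm (\<Sum>b\<in>Basis. f b *\<^sub>R b) ^ 2 = (\<Sum>b\<in>Basis. (f b)^2)"
proof -
  have "norm (\<Sum>b\<in>Basis. f b *\<^sub>R b) ^ 2 = (\<Sum>b\<in>Basis. f b *\<^sub>R b) \<bullet> (\<Sum>b\<in>Basis. f b *\<^sub>R b)"
    by (simp add: power2_norm_eq_inner)
  also have "\<dots> = (\<Sum>c\<in>Basis. ((\<Sum>b\<in>Basis. f b *\<^sub>R b) \<bullet> c) * ((\<Sum>b\<in>Basis. f b *\<^sub>R b) \<bullet> c))"
    by (rule euclidean_inner)
  also have "\<dots> = (\<Sum>b\<in>Basis. (f b)^2)"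
    by (intro sum.cong refl) (simp add: power2_eq_square)
  finally show ?thesis .
qed

interpretation lborel_product: product_sigma_finite "\<lambda>_. lborel :: real measure"
  by standard

lemma borel_measurable_sum_power2_PiM[measurable]:
  "(\<lambda>y. \<Sum>b\<in>B. (y b)^2 :: real) \<in> borel_measurable (Pi\<^sub>M B (\<lambda>_. (lborel::real measure)))"
  by (rule borel_measurable_sum) (auto intro!: measurable_compose[OF measurable_component_singleton])

lemma nn_integral_lborel_split_Basis:
  fixes b0 :: "'a::euclidean_space" and F :: "real \<Rightarrow> real \<Rightarrow> ennreal"
  assumes b0: "b0 \<in> Basis" and [measurable]: "case_prod F \<in> borel_measurable borel"
  shows "(\<integral>\<^sup>+x. F (x \<bullet> b0) (norm x ^ 2 - (x \<bullet> b0)^2) \<partial>lborel) =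
     (\<integral>\<^sup>+y. (\<integral>\<^sup>+s. F s (\<Sum>b\<in>Basis-{b0}. (y b)^2) \<partial>lborel) \<partial>(\<Pi>\<^sub>M b\<in>Basis-{b0}. lborel))"
proof -
  let ?B = "Basis - {b0} :: 'a set"
  have Basis: "Basis = insert b0 ?B" using b0 by auto
  have [measurable]: "case_prod F \<in> borel_measurable (borel \<Otimes>\<^sub>M borel)"
    by (simp add: borel_prod)
  have "(\<integral>\<^sup>+x. F (x \<bullet> b0) (norm x ^ 2 - (x \<bullet> b0)^2) \<partial>lborel) =
      (\<integral>\<^sup>+f. F (f b0) ((\<Sum>b\<in>Basis. (f b)^2) - (f b0)^2) \<partial>(\<Pi>\<^sub>M b\<in>Basis. lborel))"
    using b0 by (subst lborel_eq) (simp add: nn_integral_distr norm_sum_Basis_power2)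
  also have "\<dots> = (\<integral>\<^sup>+y. (\<integral>\<^sup>+s. F ((y(b0:=s)) b0)
      ((\<Sum>b\<in>Basis. ((y(b0:=s)) b)^2) - ((y(b0:=s)) b0)^2) \<partial>lborel) \<partial>(\<Pi>\<^sub>M b\<in>?B. lborel))"
    by (subst Basis, rule lborel_product.product_nn_integral_insert) (auto simp: Basis[symmetric])
  also have "\<dots> = (\<integral>\<^sup>+y. (\<integral>\<^sup>+s. F s (\<Sum>b\<in>?B. (y b)^2) \<partial>lborel) \<partial>(\<Pi>\<^sub>M b\<in>?B. lborel))"
  proof -
    have eq: "(\<Sum>b\<in>Basis. ((y(b0:=s)) b)^2) = s^2 + (\<Sum>b\<in>?B. (y b)^2)"
      for y :: "'a \<Rightarrow> real" and s
      using b0 by (auto simp add: sum.remove[OF finite_Basis b0] intro!: sum.cong)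
    show ?thesis by (simp only: eq fun_upd_same) simp
  qed
  finally show ?thesis .
qed

lemma AE_PiM_sum_power2_pos:
  fixes b0 :: "'a::euclidean_space"
  assumes b0: "b0 \<in> Basis" and dim: "DIM('a) \<ge> 2"
  shows "AE y in (\<Pi>\<^sub>M b\<in>Basis-{b0}. (lborel::real measure)). 0 < (\<Sum>b\<in>Basis-{b0}. (y b)^2)"
proof -
  let ?B = "Basis - {b0} :: 'a set"
  have "?B \<noteq> {}"
  proof
    assume "?B = {}"
    then have "Basis = {b0}" using b0 by auto
    then have "card (Basis::'a set) = card {b0}" by (simp only:)
    then show False using dim by simp
  qed
  then obtain b1 where b1: "b1 \<in> ?B" by auto
  have Basis: "?B = insert b1 (?B - {b1})" using b1 by auto
  have [measurable]: "(\<lambda>y. y b1) \<in> borel_measurable (\<Pi>\<^sub>M b\<in>?B. (lborel::real measure))"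
    using b1 by measurable
  have "(\<integral>\<^sup>+y. indicator {0::real} (y b1) \<partial>(\<Pi>\<^sub>M b\<in>?B. lborel)) =
      (\<integral>\<^sup>+y. (\<integral>\<^sup>+t. indicator {0::real} t \<partial>lborel) \<partial>(\<Pi>\<^sub>M b\<in>?B - {b1}. lborel))"
    by (subst Basis, subst lborel_product.product_nn_integral_insert)
      (auto intro!: measurable_compose[OF measurable_component_singleton])
  then have "AE y in (\<Pi>\<^sub>M b\<in>?B. lborel). indicator {0::real} (y b1) = (0::ennreal)"
    by (subst nn_integral_0_iff_AE[symmetric]) simp_all
  then show ?thesis
  proof (rule AE_mp, intro AE_I2 impI)
    fix y :: "'a \<Rightarrow> real"
    assume "indicator {0::real} (y b1) = (0::ennreal)"
    then have "0 < (y b1)^2" by (simp add: indicator_def split: if_splits)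
    also have "(y b1)^2 \<le> (\<Sum>b\<in>?B. (y b)^2)"
      using b1 by (intro member_le_sum) auto
    finally show "0 < (\<Sum>b\<in>?B. (y b)^2)" .
  qed
qed

lemma has_real_derivative_div_sqrt_1_minus_power2:
  fixes \<rho> u :: real
  assumes u: "u^2 < 1"
  shows "((\<lambda>u. \<rho> * u / sqrt (1 - u^2)) has_real_derivative \<rho> / sqrt (1 - u^2) ^ 3) (at u)"
proof -
  define S where "S = sqrt (1 - u^2)"
  have S: "0 < S" "S^2 = 1 - u^2" using u by (auto simp: S_def)
  have "\<rho> * S + \<rho> * u * (inverse S * u) = \<rho> * (S^2 + u^2) / S"
    using S(1) by (simp add: field_simps power2_eq_square)
  also have "\<dots> = \<rho> / S" using S by simp
  finally have "(\<rho> * S + \<rho> * u * (inverse S * u)) / (1 - u^2) = \<rho> / S ^ 3"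
    using S by (simp add: power2_eq_square power3_eq_cube)
  then show ?thesis
    using u S unfolding S_def by (auto intro!: derivative_eq_intros)
qed

lemma div_sqrt_power2_add_substitution:
  fixes r u :: real
  assumes r: "0 < r" and u: "u^2 < 1"
  defines "s \<equiv> sqrt r * u / sqrt (1 - u^2)"
  shows "s / sqrt (s^2 + r) = u" and "s^2 + r < 1 \<longleftrightarrow> r < 1 - u^2"
proof -
  have S: "0 < sqrt (1 - u^2)" "sqrt (1 - u^2)^2 = 1 - u^2" using u by auto
  have sum: "s^2 + r = r / (1 - u^2)"
    unfolding s_def using r u S by (simp add: field_simps power2_eq_square)
  then have "sqrt (s^2 + r) = sqrt r / sqrt (1 - u^2)"
    by (simp add: real_sqrt_divide)
  then show "s / sqrt (s^2 + r) = u"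
    using r S by (simp add: s_def field_simps)
  show "s^2 + r < 1 \<longleftrightarrow> r < 1 - u^2"
    unfolding sum using u by (simp add: divide_less_eq)
qed

lemma nn_integral_substitution_div_sqrt:
  fixes g :: "real \<Rightarrow> ennreal" and r :: real
  assumes g[measurable]: "g \<in> borel_measurable borel" and r: "0 < r"
  shows "(\<integral>\<^sup>+s. indicator {s. s^2 + r < 1} s * g (s / sqrt (s^2 + r)) \<partial>lborel) =
         (\<integral>\<^sup>+u. indicator {u. r < 1 - u^2} u * g u * ennreal (sqrt r / sqrt (1 - u^2) ^ 3) \<partial>lborel)"
proof (cases "r < 1")
  case False
  then have "\<not> s^2 + r < 1" "\<not> r < 1 - s^2" for s :: real
    using zero_le_power2[of s] by linarith+
  then show ?thesis by (simp add: indicator_def)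
next
  case True
  define c where "c = sqrt (1 - r)"
  have c: "0 < c" "c < 1" "c^2 = 1 - r" using True r by (auto simp: c_def)
  define \<phi> where "\<phi> = (\<lambda>u. sqrt r * u / sqrt (1 - u^2))"
  define \<phi>' where "\<phi>' = (\<lambda>u. sqrt r / sqrt (1 - u^2) ^ 3)"
  have in_c_iff: "u \<in> {-c..c} \<longleftrightarrow> r \<le> 1 - u^2" for u
    using c abs_le_square_iff[of u c] by (auto simp: abs_le_iff)
  then have u_c: "u^2 < 1" if "u \<in> {-c..c}" for u
    using that r by fastforce
  have \<phi>_c: "\<phi> c = c" "\<phi> (-c) = -c"
    using r c by (auto simp: \<phi>_def c_def)
  define f where "f = (\<lambda>s. indicator {s. s^2 + r < 1} s * g (s / sqrt (s^2 + r)) :: ennreal)"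
  have [measurable]: "f \<in> borel_measurable borel" unfolding f_def by measurable
  have "s^2 + r < 1 \<Longrightarrow> s \<in> {\<phi> (-c)..\<phi> c}" for s
    using in_c_iff[of s] \<phi>_c by auto
  then have "(\<integral>\<^sup>+s. f s \<partial>lborel) = (\<integral>\<^sup>+s. f s * indicator {\<phi> (-c)..\<phi> c} s \<partial>lborel)"
    by (intro nn_integral_cong) (auto simp: f_def indicator_def)
  also have "\<dots> = (\<integral>\<^sup>+u. f (\<phi> u) * \<phi>' u * indicator {-c..c} u \<partial>lborel)"
  proof (rule nn_integral_substitution_aux)
    show "continuous_on {-c..c} \<phi>'"
      unfolding \<phi>'_def by (intro continuous_intros) (auto dest!: u_c)
    show "(\<phi> has_real_derivative \<phi>' u) (at u)" if "u \<in> {-c..c}" for u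
      unfolding \<phi>_def \<phi>'_def using u_c[OF that] by (rule has_real_derivative_div_sqrt_1_minus_power2)
    show "0 \<le> \<phi>' u" if "u \<in> {-c..c}" for u
      unfolding \<phi>'_def using r u_c[OF that]
      by (intro divide_nonneg_nonneg zero_le_power real_sqrt_ge_zero) auto
  qed (use c in auto)
  also have "\<dots> = (\<integral>\<^sup>+u. indicator {u. r < 1 - u^2} u * g u * ennreal (sqrt r / sqrt (1 - u^2) ^ 3) \<partial>lborel)"
    using in_c_iff u_c div_sqrt_power2_add_substitution[OF r]
    by (intro nn_integral_cong) (auto simp: f_def \<phi>_def \<phi>'_def indicator_def mult_ac)
  finally show ?thesis unfolding f_def .
qed

lemma nn_integral_lborel_dilation:
  fixes h :: "'a::euclidean_space \<Rightarrow> ennreal"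
  assumes [measurable]: "h \<in> borel_measurable borel" and R: "0 < R"
  shows "(\<integral>\<^sup>+x. h x \<partial>lborel) = ennreal (R ^ DIM('a)) * (\<integral>\<^sup>+z. h (R *\<^sub>R z) \<partial>lborel)"
proof -
  have "(\<integral>\<^sup>+x. h x \<partial>lborel) =
      (\<integral>\<^sup>+x. h x \<partial>(density (distr lborel borel (\<lambda>x. 0 + R *\<^sub>R x)) (\<lambda>_. \<bar>R\<bar>^DIM('a))))"
    using lborel_affine[of R "0::'a"] R by simp
  also have "\<dots> = (\<integral>\<^sup>+z. ennreal (R ^ DIM('a)) * h (R *\<^sub>R z) \<partial>lborel)"
    using R by (simp add: nn_integral_density nn_integral_distr ennreal_power)
  also have "\<dots> = ennreal (R ^ DIM('a)) * (\<integral>\<^sup>+z. h (R *\<^sub>R z) \<partial>lborel)"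
    by (rule nn_integral_cmult) measurable
  finally show ?thesis .
qed

text \<open>The dimensional constant of the cone formula below; it cancels in the normalisation
  of the Power Spherical law.\<close>

definition transverse_integral :: "'a::euclidean_space \<Rightarrow> real \<Rightarrow> ennreal" where
  "transverse_integral b0 t =
     (\<integral>\<^sup>+y. ennreal (sqrt (\<Sum>b\<in>Basis-{b0}. (y b)^2)) * indicator {..<t} (\<Sum>b\<in>Basis-{b0}. (y b)^2)
       \<partial>(\<Pi>\<^sub>M b\<in>Basis-{b0}. (lborel::real measure)))"

lemma transverse_integral_eq_nn_integral_lborel:
  fixes b0 :: "'a::euclidean_space"
  assumes b0: "b0 \<in> Basis"
  shows "transverse_integral b0 t = (\<integral>\<^sup>+x. (if 0 \<le> x \<bullet> b0 \<and> x \<bullet> b0 \<le> sqrt (norm x ^ 2 - (x \<bullet> b0)^2)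
      \<and> norm x ^ 2 - (x \<bullet> b0)^2 < t then 1 else 0) \<partial>lborel)"
proof -
  define F where "F = (\<lambda>s r. if 0 \<le> s \<and> s \<le> sqrt r \<and> r < t then 1 else (0::ennreal))"
  have "case_prod F \<in> borel_measurable (borel \<Otimes>\<^sub>M borel)" unfolding F_def by measurable
  then have [measurable]: "case_prod F \<in> borel_measurable borel" by (simp add: borel_prod)
  have "(\<integral>\<^sup>+s. F s r \<partial>lborel) = ennreal (sqrt r) * indicator {..<t} r" if "0 \<le> r" for r
  proof -
    have "(\<integral>\<^sup>+s. F s r \<partial>lborel) = (\<integral>\<^sup>+s. indicator {0..sqrt r} s * indicator {..<t} r \<partial>lborel)"
      by (intro nn_integral_cong) (auto simp: F_def indicator_def)
    then show ?thesis using that by (simp add: nn_integral_multc)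
  qed
  then have "transverse_integral b0 t =
      (\<integral>\<^sup>+y. (\<integral>\<^sup>+s. F s (\<Sum>b\<in>Basis-{b0}. (y b)^2) \<partial>lborel) \<partial>(\<Pi>\<^sub>M b\<in>Basis-{b0}. lborel))"
    unfolding transverse_integral_def by (intro nn_integral_cong) (simp add: sum_nonneg)
  also have "\<dots> = (\<integral>\<^sup>+x. F (x \<bullet> b0) (norm x ^ 2 - (x \<bullet> b0)^2) \<partial>lborel)"
    by (rule nn_integral_lborel_split_Basis[symmetric, OF b0]) measurable
  finally show ?thesis unfolding F_def .
qed

lemma transverse_integral_dilation:
  fixes b0 :: "'a::euclidean_space"
  assumes b0: "b0 \<in> Basis" and t: "0 < t"
  shows "transverse_integral b0 t = ennreal (t powr (real DIM('a) / 2)) * transverse_integral b0 1"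
proof -
  define R where "R = sqrt t"
  have R: "0 < R" "R^2 = t" using t by (auto simp: R_def)
  define H where "H = (\<lambda>t x. (if 0 \<le> x \<bullet> b0 \<and> x \<bullet> b0 \<le> sqrt (norm x ^ 2 - (x \<bullet> b0)^2)
      \<and> norm x ^ 2 - (x \<bullet> b0)^2 < t then 1 else (0::ennreal)))"
  have [measurable]: "H t \<in> borel_measurable borel" for t unfolding H_def by measurable
  have H_dilation: "H t (R *\<^sub>R z) = H 1 z" for z
  proof -
    have e1: "norm (R *\<^sub>R z) ^ 2 - ((R *\<^sub>R z) \<bullet> b0)^2 = R^2 * (norm z ^ 2 - (z \<bullet> b0)^2)"
      by (simp add: power_mult_distrib algebra_simps)
    have e2: "sqrt (R^2 * (norm z ^ 2 - (z \<bullet> b0)^2)) = R * sqrt (norm z ^ 2 - (z \<bullet> b0)^2)"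
      using R(1) by (simp only: real_sqrt_mult real_sqrt_abs abs_of_pos)
    have "t * X < t \<longleftrightarrow> X < 1" for X
      using t by (metis mult.right_neutral mult_less_cancel_left_pos)
    then show ?thesis unfolding H_def e1 e2 using R
      by (simp add: zero_le_mult_iff mult_le_cancel_left_pos)
  qed
  have "transverse_integral b0 t = (\<integral>\<^sup>+x. H t x \<partial>lborel)"
    unfolding H_def by (rule transverse_integral_eq_nn_integral_lborel[OF b0])
  also have "\<dots> = ennreal (R ^ DIM('a)) * (\<integral>\<^sup>+z. H t (R *\<^sub>R z) \<partial>lborel)"
    using R by (intro nn_integral_lborel_dilation) auto
  also have "\<dots> = ennreal (R ^ DIM('a)) * transverse_integral b0 1"
    unfolding H_dilation by (simp only: H_def transverse_integral_eq_nn_integral_lborel[OF b0])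
  also have "R ^ DIM('a) = t powr (real DIM('a) / 2)"
    using t by (simp add: R_def powr_half_sqrt[symmetric] powr_powr powr_realpow[symmetric])
  finally show ?thesis .
qed

lemma ennreal_divide_eq_mult: "0 \<le> a \<Longrightarrow> ennreal (a / c) = ennreal a * ennreal (1 / c)"
  by (simp add: ennreal_mult'[symmetric])

text \<open>\<open>(1 - u\<^sup>2) powr ((d - 3) / 2)\<close> is, up to normalisation, the density of one coordinate
  of the uniform distribution on the unit sphere of \<open>\<real>\<^sup>d\<close>.\<close>

definition sphere_marginal_integral :: "nat \<Rightarrow> (real \<Rightarrow> ennreal) \<Rightarrow> ennreal" where
  "sphere_marginal_integral d g =
     (\<integral>\<^sup>+u. indicator {-1<..<1} u * g u * ennreal ((1 - u^2) powr ((real d - 3) / 2)) \<partial>lborel)"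

lemma sphere_marginal_integral_cong:
  "(\<And>u. -1 < u \<Longrightarrow> u < 1 \<Longrightarrow> g u = h u) \<Longrightarrow>
    sphere_marginal_integral d g = sphere_marginal_integral d h"
  unfolding sphere_marginal_integral_def by (intro nn_integral_cong) (simp add: indicator_def)

lemma nn_integral_transverse_slice:
  fixes b0 :: "'a::euclidean_space" and u :: real
  assumes b0: "b0 \<in> Basis"
  defines "q \<equiv> \<lambda>y. \<Sum>b\<in>Basis-{b0}. (y b)^2"
  shows "(\<integral>\<^sup>+y. indicator {..<1 - u^2} (q y) * ennreal (sqrt (q y) / sqrt (1 - u^2) ^ 3)
            \<partial>(\<Pi>\<^sub>M b\<in>Basis-{b0}. lborel)) =
         indicator {-1<..<1} u * ennreal ((1 - u^2) powr ((real DIM('a) - 3) / 2)) *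
           transverse_integral b0 1"
proof (cases "0 < 1 - u^2")
  case False
  have "0 \<le> q y" for y by (simp add: q_def sum_nonneg)
  then have "\<not> q y < 1 - u^2" for y using False by (metis not_less order.trans)
  moreover have "u \<notin> {-1<..<1}" using False by (auto simp: abs_square_less_1 abs_less_iff)
  ultimately show ?thesis by simp
next
  case True
  let ?v = "1 - u^2"
  have [measurable]: "q \<in> borel_measurable (\<Pi>\<^sub>M b\<in>Basis-{b0}. lborel)"
    unfolding q_def by measurable
  have "indicator {..<?v} (q y) * ennreal (sqrt (q y) / sqrt ?v ^ 3) =
      ennreal (1 / sqrt ?v ^ 3) * (ennreal (sqrt (q y)) * indicator {..<?v} (q y))" for y
    using ennreal_divide_eq_mult[of "sqrt (q y)" "sqrt ?v ^ 3"]
    by (simp add: q_def sum_nonneg indicator_def mult_ac)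
  then have "(\<integral>\<^sup>+y. indicator {..<?v} (q y) * ennreal (sqrt (q y) / sqrt ?v ^ 3)
      \<partial>(\<Pi>\<^sub>M b\<in>Basis-{b0}. lborel)) = ennreal (1 / sqrt ?v ^ 3) * transverse_integral b0 ?v"
    unfolding transverse_integral_def q_def by (simp add: nn_integral_cmult)
  also have "\<dots> = ennreal (1 / sqrt ?v ^ 3 * ?v powr (real DIM('a) / 2)) * transverse_integral b0 1"
    using True by (simp add: transverse_integral_dilation[OF b0 True] ennreal_mult'[symmetric]
        mult.assoc[symmetric])
  also have "1 / sqrt ?v ^ 3 * ?v powr (real DIM('a) / 2) = ?v powr ((real DIM('a) - 3) / 2)"
  proof -
    have "sqrt ?v ^ 3 = ?v powr (3/2)"
      using True by (simp add: powr_half_sqrt[symmetric] powr_powr powr_realpow[symmetric])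
    then show ?thesis using True by (simp add: powr_diff[symmetric] diff_divide_distrib)
  qed
  finally show ?thesis
    using True by (simp add: abs_square_less_1 abs_less_iff)
qed

text \<open>Fubini along \<open>b0\<close>, then for fixed transverse part \<open>y\<close> with \<open>q = |y|\<^sup>2 > 0\<close> the
  substitution \<open>u = s / sqrt (s\<^sup>2 + q)\<close> in the \<open>b0\<close>-coordinate \<open>s\<close>.\<close>

lemma nn_integral_punctured_ball_Basis:
  fixes b0 :: "'a::euclidean_space" and g :: "real \<Rightarrow> ennreal"
  assumes b0: "b0 \<in> Basis" and dim: "DIM('a) \<ge> 2" and g[measurable]: "g \<in> borel_measurable borel"
  shows "(\<integral>\<^sup>+x. indicator (ball 0 1 - {0}) x * g ((x \<bullet> b0) / norm x) \<partial>lborel) =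
         transverse_integral b0 1 * sphere_marginal_integral DIM('a) g"
proof -
  let ?Y = "Pi\<^sub>M (Basis-{b0}) (\<lambda>_. lborel::real measure)"
  let ?q = "\<lambda>y::'a \<Rightarrow> real. \<Sum>b\<in>Basis-{b0}. (y b)^2"
  let ?slice = "\<lambda>y u. indicator {u. ?q y < 1 - u^2} u * g u * ennreal (sqrt (?q y) / sqrt (1 - u^2) ^ 3)"
  interpret Y: sigma_finite_measure ?Y by (rule lborel_product.sigma_finite) simp
  interpret pair_sigma_finite lborel ?Y ..
  define F where "F = (\<lambda>s r. if 0 < s^2 + r \<and> s^2 + r < 1 then g (s / sqrt (s^2 + r)) else (0::ennreal))"
  have "case_prod F \<in> borel_measurable (borel \<Otimes>\<^sub>M borel)" unfolding F_def by measurable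
  then have [measurable]: "case_prod F \<in> borel_measurable borel" by (simp add: borel_prod)
  have "indicator (ball 0 1 - {0}) x * g ((x \<bullet> b0) / norm x) = F (x \<bullet> b0) (norm x ^ 2 - (x \<bullet> b0)^2)"
    for x :: 'a
    by (auto simp: F_def indicator_def power_less_one_iff)
  then have "(\<integral>\<^sup>+x. indicator (ball 0 1 - {0}) x * g ((x \<bullet> b0) / norm x) \<partial>lborel) =
        (\<integral>\<^sup>+y. (\<integral>\<^sup>+s. F s (?q y) \<partial>lborel) \<partial>?Y)"
    using nn_integral_lborel_split_Basis[OF b0] by simp
  also have "\<dots> = (\<integral>\<^sup>+y. (\<integral>\<^sup>+u. ?slice y u \<partial>lborel) \<partial>?Y)"
  proof (rule nn_integral_cong_AE)
    show "AE y in ?Y. (\<integral>\<^sup>+s. F s (?q y) \<partial>lborel) = (\<integral>\<^sup>+u. ?slice y u \<partial>lborel)"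
      using AE_PiM_sum_power2_pos[OF b0 dim]
    proof (rule AE_mp, intro AE_I2 impI)
      fix y :: "'a \<Rightarrow> real"
      assume q: "0 < ?q y"
      then have "(\<integral>\<^sup>+s. F s (?q y) \<partial>lborel) =
          (\<integral>\<^sup>+s. indicator {s. s^2 + ?q y < 1} s * g (s / sqrt (s^2 + ?q y)) \<partial>lborel)"
        by (intro nn_integral_cong) (simp add: F_def indicator_def add_nonneg_pos)
      also have "\<dots> = (\<integral>\<^sup>+u. ?slice y u \<partial>lborel)"
        using g q by (rule nn_integral_substitution_div_sqrt)
      finally show "(\<integral>\<^sup>+s. F s (?q y) \<partial>lborel) = (\<integral>\<^sup>+u. ?slice y u \<partial>lborel)" .
    qed
  qed
  also have "\<dots> = (\<integral>\<^sup>+u. (\<integral>\<^sup>+y. ?slice y u \<partial>?Y) \<partial>lborel)"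
    by (rule Fubini') measurable
  also have "\<dots> = (\<integral>\<^sup>+u. transverse_integral b0 1 * (indicator {-1<..<1} u * g u *
      ennreal ((1 - u^2) powr ((real DIM('a) - 3) / 2))) \<partial>lborel)"
  proof (intro nn_integral_cong)
    fix u :: real
    have "(\<integral>\<^sup>+y. ?slice y u \<partial>?Y) = (\<integral>\<^sup>+y. g u * (indicator {..<1 - u^2} (?q y) *
        ennreal (sqrt (?q y) / sqrt (1 - u^2) ^ 3)) \<partial>?Y)"
      by (intro nn_integral_cong) (simp add: indicator_def)
    also have "\<dots> = g u * (\<integral>\<^sup>+y. indicator {..<1 - u^2} (?q y) *
        ennreal (sqrt (?q y) / sqrt (1 - u^2) ^ 3) \<partial>?Y)"
      by (rule nn_integral_cmult) measurable
    finally show "(\<integral>\<^sup>+y. ?slice y u \<partial>?Y) = transverse_integral b0 1 * (indicator {-1<..<1} u * g u *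
        ennreal ((1 - u^2) powr ((real DIM('a) - 3) / 2)))"
      by (simp add: nn_integral_transverse_slice[OF b0] mult_ac)
  qed
  also have "\<dots> = transverse_integral b0 1 * sphere_marginal_integral DIM('a) g"
    unfolding sphere_marginal_integral_def by (rule nn_integral_cmult) measurable
  finally show ?thesis .
qed

section \<open>The incomplete Beta function\<close>

lemma Beta_real_pos: "0 < a \<Longrightarrow> 0 < b \<Longrightarrow> 0 < Beta a (b::real)"
  by (simp add: Beta_def Gamma_real_pos)

lemma integrable_on_Beta_kernel:
  fixes a b x :: real
  assumes "0 < a" "0 < b" "x \<le> 1"
  shows "(\<lambda>u. u powr (a - 1) * (1 - u) powr (b - 1)) integrable_on {0..x}"
  using integrable_Beta'[OF assms(1,2)] by (rule integrable_on_subinterval) (use assms in auto)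

lemma inc_beta_eq_integral:
  assumes ab: "0 < a" "0 < b" and x: "0 \<le> x" "x \<le> 1"
  shows "inc_beta x a b = integral {0..x} (\<lambda>u. u powr (a - 1) * (1 - u) powr (b - 1)) / Beta a b"
proof -
  have "set_integrable lborel {0..x} (\<lambda>u. u powr (a - 1) * (1 - u) powr (b - 1))"
    by (rule set_integrable_subset[OF integrable_Beta[OF ab]]) (use x in auto)
  then have "(LBINT u=0..x. u powr (a - 1) * (1 - u) powr (b - 1)) =
      integral {0..x} (\<lambda>u. u powr (a - 1) * (1 - u) powr (b - 1))"
    using interval_integral_eq_integral[OF x(1)] by (simp add: zero_ereal_def)
  then show ?thesis by (simp add: inc_beta_def)
qed

lemma inc_beta_0: "0 < a \<Longrightarrow> 0 < b \<Longrightarrow> inc_beta 0 a b = 0"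
  by (simp add: inc_beta_eq_integral)

lemma inc_beta_1: "0 < a \<Longrightarrow> 0 < b \<Longrightarrow> inc_beta 1 a b = 1"
  using has_integral_Beta_real[THEN integral_unique, of a b] Beta_real_pos[of a b]
  by (simp add: inc_beta_eq_integral)

lemma inc_beta_continuous_on:
  assumes ab: "0 < a" "0 < b"
  shows "continuous_on {0..1} (\<lambda>x. inc_beta x a b)"
proof -
  have "continuous_on {0..1}
      (\<lambda>x. integral {0..x} (\<lambda>u. u powr (a - 1) * (1 - u) powr (b - 1)) / Beta a b)"
    by (intro continuous_intros indefinite_integral_continuous_1 integrable_on_Beta_kernel ab)
      (use Beta_real_pos[OF ab] in auto)
  then show ?thesis
    by (rule continuous_on_cong[THEN iffD1, rotated 2]) (auto simp: inc_beta_eq_integral[OF ab])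
qed

lemma inc_beta_strict_mono:
  assumes ab: "0 < a" "0 < b" and xy: "0 \<le> x" "x < y" "y \<le> 1"
  shows "inc_beta x a b < inc_beta y a b"
proof -
  define f where "f = (\<lambda>u::real. u powr (a - 1) * (1 - u) powr (b - 1))"
  have f_on_0y: "f integrable_on {0..y}"
    unfolding f_def using ab xy by (intro integrable_on_Beta_kernel) auto
  then have f_on_xy: "f integrable_on {x..y}"
    by (rule integrable_on_subinterval) (use xy in auto)
  have "integral {x..y} f \<noteq> 0"
  proof
    assume "integral {x..y} f = 0"
    then have "(\<integral>\<^sup>+v. ennreal (f v) * indicator {x..y} v \<partial>lborel) = 0"
      using nn_integral_has_integral_lebesgue'[OF _ integrable_integral[OF f_on_xy]]
      by (simp add: f_def)
    then have "AE v in lborel. ennreal (f v) * indicator {x..y} v = 0"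
      by (subst (asm) nn_integral_0_iff_AE) (auto simp: f_def)
    then have "AE v in lborel. v \<notin> {x<..<y}"
      by eventually_elim (use xy in \<open>auto simp: f_def indicator_def\<close>)
    then have "emeasure lborel {x<..<y} = 0"
      by (subst (asm) AE_iff_measurable[of "{x<..<y}"]) auto
    then show False using xy by simp
  qed
  moreover have "0 \<le> integral {x..y} f"
    using f_on_xy by (rule integral_nonneg) (simp add: f_def)
  moreover have "integral {0..y} f = integral {0..x} f + integral {x..y} f"
    using xy f_on_0y by (intro Henstock_Kurzweil_Integration.integral_combine[symmetric]) auto
  ultimately show ?thesis
    using xy Beta_real_pos[OF ab]
    by (simp add: inc_beta_eq_integral[OF ab] f_def[symmetric] divide_strict_right_mono)
qed

lemma inc_beta_ex1:
  assumes ab: "0 < a" "0 < b" and y: "y \<in> {0..1}"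
  shows "\<exists>!x. x \<in> {0..1} \<and> inc_beta x a b = y"
proof -
  obtain x where x: "0 \<le> x" "x \<le> 1" "inc_beta x a b = y"
    using IVT'[of "\<lambda>x. inc_beta x a b" 0 y 1] y
    by (auto simp: inc_beta_0[OF ab] inc_beta_1[OF ab] inc_beta_continuous_on[OF ab])
  moreover have "x' = x" if "x' \<in> {0..1}" "inc_beta x' a b = y" for x'
    using inc_beta_strict_mono[OF ab, of x' x] inc_beta_strict_mono[OF ab, of x x'] x that
    by (cases x' x rule: linorder_cases) auto
  ultimately show ?thesis by auto
qed

lemma inc_beta_nonneg:
  assumes "0 < a" "0 < b" "0 \<le> x" "x \<le> 1"
  shows "0 \<le> inc_beta x a b"
  using inc_beta_strict_mono[of a b 0 x] assms by (cases "x = 0") (auto simp: inc_beta_0)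

lemma inc_beta_inv_iff:
  assumes "0 < a" "0 < b" "y \<in> {0..1}"
  shows "x \<in> {0..1} \<and> inc_beta x a b = y \<longleftrightarrow> x = inc_beta_inv y a b"
proof
  assume "x \<in> {0..1} \<and> inc_beta x a b = y"
  with inc_beta_ex1[OF assms] show "x = inc_beta_inv y a b"
    unfolding inc_beta_inv_def by (rule the1_equality[symmetric])
next
  assume "x = inc_beta_inv y a b"
  with theI'[OF inc_beta_ex1[OF assms]] show "x \<in> {0..1} \<and> inc_beta x a b = y"
    unfolding inc_beta_inv_def by simp
qed

lemma inc_beta_inv_affine_iff:
  assumes "0 < a" "0 < b" "y \<in> {0..1}"
  shows "t \<in> {-1..1} \<and> inc_beta ((t + 1) / 2) a b = y \<longleftrightarrow> t = 2 * inc_beta_inv y a b - 1"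
proof -
  have "t \<in> {-1..1} \<longleftrightarrow> (t + 1) / 2 \<in> {0..1}" by auto
  then have "t \<in> {-1..1} \<and> inc_beta ((t + 1) / 2) a b = y \<longleftrightarrow> (t + 1) / 2 = inc_beta_inv y a b"
    using inc_beta_inv_iff[OF assms] by blast
  then show ?thesis by auto
qed

lemma Beta_kernel_affine:
  fixes a b v :: real
  assumes "0 < v" "v < 1"
  shows "(1 + (-1 + 2 * v)) powr (a - 1) * (1 - (-1 + 2 * v)) powr (b - 1) =
    2 powr (a + b - 2) * (v powr (a - 1) * (1 - v) powr (b - 1))"
proof -
  have "(1 + (-1 + 2 * v)) powr (a - 1) * (1 - (-1 + 2 * v)) powr (b - 1) =
      (2 * v) powr (a - 1) * (2 * (1 - v)) powr (b - 1)"
    by (simp add: algebra_simps)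
  also have "\<dots> = (2 powr (a - 1) * 2 powr (b - 1)) * (v powr (a - 1) * (1 - v) powr (b - 1))"
    using assms powr_mult[of 2 v "a - 1"] powr_mult[of 2 "1 - v" "b - 1"] by (simp add: mult_ac)
  also have "2 powr (a - 1) * 2 powr (b - 1) = (2::real) powr (a + b - 2)"
    by (simp add: powr_add[symmetric] algebra_simps)
  finally show ?thesis .
qed

text \<open>Substitute \<open>u = 2 v - 1\<close>. The endpoints need no care: the Beta kernel vanishes at \<open>0\<close>
  and \<open>1\<close> since \<open>0 powr p = 0\<close>.\<close>

lemma nn_integral_shifted_Beta_kernel:
  assumes ab: "0 < a" "0 < b" and t: "-1 \<le> t" "t \<le> 1"
  shows "(\<integral>\<^sup>+u. indicator {-1<..<1} u * indicator {..t} u *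
            ennreal ((1 + u) powr (a - 1) * (1 - u) powr (b - 1)) \<partial>lborel) =
         ennreal (2 powr (a + b - 1) * Beta a b * inc_beta ((t + 1) / 2) a b)"
proof -
  define x where "x = (t + 1) / 2"
  have x: "0 \<le> x" "x \<le> 1" using t by (auto simp: x_def)
  define f where "f = (\<lambda>v::real. v powr (a - 1) * (1 - v) powr (b - 1))"
  define F where "F = (\<lambda>u::real. indicator {-1<..<1} u * indicator {..t} u *
      ennreal ((1 + u) powr (a - 1) * (1 - u) powr (b - 1)))"
  have [measurable]: "F \<in> borel_measurable borel" unfolding F_def by measurable
  have F_affine: "F (-1 + 2 * v) = ennreal (2 powr (a + b - 2)) * (ennreal (f v) * indicator {0..x} v)" for v
  proof (cases "0 < v \<and> v < 1")
    case True
    then have kernel: "(1 + (-1 + 2 * v)) powr (a - 1) * (1 - (-1 + 2 * v)) powr (b - 1) =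
        2 powr (a + b - 2) * f v"
      unfolding f_def by (intro Beta_kernel_affine) auto
    have "-1 + 2 * v \<le> t \<longleftrightarrow> v \<le> x" by (auto simp: x_def)
    then show ?thesis
      unfolding F_def kernel using True by (simp add: indicator_def ennreal_mult f_def)
  qed (use x in \<open>auto simp: F_def f_def indicator_def not_less\<close>)
  have "(\<integral>\<^sup>+u. F u \<partial>lborel) = ennreal 2 * (\<integral>\<^sup>+v. F (-1 + 2 * v) \<partial>lborel)"
    using nn_integral_real_affine[of F 2 "-1"] by simp
  also have "\<dots> = ennreal (2 * 2 powr (a + b - 2)) * (\<integral>\<^sup>+v. ennreal (f v) * indicator {0..x} v \<partial>lborel)"
    unfolding F_affine by (subst nn_integral_cmult) (simp_all add: f_def ennreal_mult mult.assoc)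
  also have "(\<integral>\<^sup>+v. ennreal (f v) * indicator {0..x} v \<partial>lborel) = ennreal (integral {0..x} f)"
    using integrable_on_Beta_kernel[OF ab x(2)]
    by (intro nn_integral_has_integral_lebesgue') (auto simp: f_def)
  also have "integral {0..x} f = Beta a b * inc_beta x a b"
    using Beta_real_pos[OF ab] by (simp add: inc_beta_eq_integral[OF ab x] f_def)
  also have "2 * 2 powr (a + b - 2) = (2::real) powr (a + b - 1)"
    using powr_add[of 2 "a + b - 2" 1] by simp
  finally show ?thesis
    by (simp add: F_def x_def ennreal_mult'[symmetric] mult.assoc)
qed

section \<open>The law of \<open>\<mu> \<bullet> X\<close>\<close>

lemma sphere_marginal_integral_Beta:
  fixes d :: nat and \<kappa> t :: real
  assumes d: "2 \<le> d" and \<kappa>: "0 \<le> \<kappa>" and t: "-1 \<le> t" "t \<le> 1"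
  defines "\<alpha> \<equiv> (real d - 1) / 2 + \<kappa>" and "\<beta> \<equiv> (real d - 1) / 2"
  shows "sphere_marginal_integral d (\<lambda>u. ennreal ((1 + u) powr \<kappa>) * indicator {..t} u) =
    ennreal (2 powr (\<alpha> + \<beta> - 1) * Beta \<alpha> \<beta> * inc_beta ((t + 1) / 2) \<alpha> \<beta>)"
proof -
  have "0 < (real d - 1) / 2" using d by simp
  then have ab: "0 < \<alpha>" "0 < \<beta>" using \<kappa> by (simp_all add: \<alpha>_def \<beta>_def add_pos_nonneg)
  have "(1 + u) powr \<kappa> * (1 - u^2) powr ((real d - 3) / 2) = (1 + u) powr (\<alpha> - 1) * (1 - u) powr (\<beta> - 1)"
    if "-1 < u" "u < 1" for u
  proof -
    have "1 - u^2 = (1 + u) * (1 - u)" by (simp add: power2_eq_square algebra_simps)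
    then have "(1 - u^2) powr ((real d - 3) / 2) =
        (1 + u) powr ((real d - 3) / 2) * (1 - u) powr ((real d - 3) / 2)"
      using that by (simp add: powr_mult)
    moreover have "\<alpha> - 1 = \<kappa> + (real d - 3) / 2" "\<beta> - 1 = (real d - 3) / 2"
      by (simp_all add: \<alpha>_def \<beta>_def field_simps)
    ultimately show ?thesis by (simp only: powr_add mult_ac)
  qed
  then have "sphere_marginal_integral d (\<lambda>u. ennreal ((1 + u) powr \<kappa>) * indicator {..t} u) =
      (\<integral>\<^sup>+u. indicator {-1<..<1} u * indicator {..t} u *
         ennreal ((1 + u) powr (\<alpha> - 1) * (1 - u) powr (\<beta> - 1)) \<partial>lborel)"
    unfolding sphere_marginal_integral_def
    by (intro nn_integral_cong) (auto simp: indicator_def ennreal_mult'[symmetric])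
  also have "\<dots> = ennreal (2 powr (\<alpha> + \<beta> - 1) * Beta \<alpha> \<beta> * inc_beta ((t + 1) / 2) \<alpha> \<beta>)"
    using ab t by (rule nn_integral_shifted_Beta_kernel)
  finally show ?thesis .
qed

lemma sphere_marginal_integral_1:
  assumes "2 \<le> d"
  shows "sphere_marginal_integral d (\<lambda>_. 1) =
    ennreal (2 powr (real d - 2) * Beta ((real d - 1) / 2) ((real d - 1) / 2))"
proof -
  have "sphere_marginal_integral d (\<lambda>_. 1) =
      sphere_marginal_integral d (\<lambda>u. ennreal ((1 + u) powr 0) * indicator {..1} u)"
    by (intro sphere_marginal_integral_cong) simp
  also have "\<dots> = ennreal (2 powr (real d - 2) * Beta ((real d - 1) / 2) ((real d - 1) / 2))"
    using sphere_marginal_integral_Beta[of d 0 1] assms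
      inc_beta_1[of "(real d - 1) / 2" "(real d - 1) / 2"]
    by simp
  finally show ?thesis .
qed

lemma measurable_sphere_surface_measure:
  "f \<in> borel_measurable borel \<Longrightarrow> f \<in> borel_measurable (sphere_surface_measure :: 'a::euclidean_space measure)"
  unfolding sphere_surface_measure_def by (simp add: measurable_restrict_space1)

lemma space_sphere_surface_measure:
  "space (sphere_surface_measure :: 'a::euclidean_space measure) = sphere 0 1"
  unfolding sphere_surface_measure_def by (simp add: space_restrict_space)

lemma sets_sphere_surface_measure:
  "sets (sphere_surface_measure :: 'a::euclidean_space measure) = sets (restrict_space borel (sphere 0 1))"
  unfolding sphere_surface_measure_def by simp

lemma nn_integral_sphere_surface_measure:
  fixes f :: "'a::euclidean_space \<Rightarrow> ennreal"
  assumes f[measurable]: "f \<in> borel_measurable borel"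
  shows "(\<integral>\<^sup>+x. f x \<partial>sphere_surface_measure) =
     ennreal (real DIM('a)) * (\<integral>\<^sup>+x. indicator (ball 0 1 - {0}) x * f (x /\<^sub>R norm x) \<partial>lborel)"
proof -
  define M where "M = restrict_space (lborel :: 'a measure) (ball 0 1 - {0})"
  define N where "N = restrict_space (borel :: 'a measure) (sphere 0 1)"
  define T where "T = (\<lambda>x::'a. x /\<^sub>R norm x)"
  have [measurable]: "ball 0 1 - {0} \<in> sets (borel :: 'a measure)"
    by (intro sets.Diff borel_open borel_closed) auto
  have "T \<in> measurable M N"
    unfolding M_def N_def T_def
    by (subst measurable_restrict_space2_iff)
      (auto intro: measurable_restrict_space1 simp: space_restrict_space)
  moreover have fN: "f \<in> borel_measurable N"
    unfolding N_def by (rule measurable_restrict_space1) simp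
  ultimately have "(\<integral>\<^sup>+x. f x \<partial>sphere_surface_measure) = (\<integral>\<^sup>+x. ennreal (real DIM('a)) * f (T x) \<partial>M)"
    unfolding sphere_surface_measure_def M_def[symmetric] N_def[symmetric] T_def[symmetric]
    by (simp add: nn_integral_density nn_integral_distr)
  also have "\<dots> = (\<integral>\<^sup>+x. ennreal (real DIM('a)) * (indicator (ball 0 1 - {0}) x * f (T x)) \<partial>lborel)"
    unfolding M_def by (subst nn_integral_restrict_space) (simp_all add: mult_ac)
  also have "\<dots> = ennreal (real DIM('a)) * (\<integral>\<^sup>+x. indicator (ball 0 1 - {0}) x * f (T x) \<partial>lborel)"
    unfolding T_def by (rule nn_integral_cmult) measurable
  finally show ?thesis unfolding T_def .
qed

lemma nn_integral_punctured_ball_inner: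
  fixes \<mu> b0 :: "real^'n" and g :: "real \<Rightarrow> ennreal"
  assumes \<mu>: "norm \<mu> = 1" and b0: "b0 \<in> Basis" and dim: "CARD('n) \<ge> 2"
    and g[measurable]: "g \<in> borel_measurable borel"
  shows "(\<integral>\<^sup>+x. indicator (ball 0 1 - {0}) x * g ((\<mu> \<bullet> x) / norm x) \<partial>lborel) =
         transverse_integral b0 1 * sphere_marginal_integral CARD('n) g"
proof -
  obtain Q where Q: "orthogonal_transformation Q" "Q b0 = \<mu>"
    using orthogonal_transformation_exists[of b0 \<mu>] \<mu> b0 by auto
  let ?G = "\<lambda>x::real^'n. indicator (ball 0 1 - {0}) x * g ((\<mu> \<bullet> x) / norm x)"
  have [measurable]: "Q \<in> borel_measurable borel"
    using Q(1) by (rule borel_measurable_orthogonal_transformation)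
  have [measurable]: "ball 0 1 - {0} \<in> sets (borel :: (real^'n) measure)"
    by (intro sets.Diff borel_open borel_closed) auto
  have "?G (Q z) = indicator (ball 0 1 - {0}) z * g ((z \<bullet> b0) / norm z)" for z
  proof -
    have "norm (Q z) = norm z" using Q(1) by (simp add: orthogonal_transformation_norm)
    moreover have "\<mu> \<bullet> Q z = z \<bullet> b0"
      using Q unfolding orthogonal_transformation_def by (metis inner_commute)
    moreover have "Q z = 0 \<longleftrightarrow> z = 0"
      using \<open>norm (Q z) = norm z\<close> by (metis norm_eq_zero)
    ultimately show ?thesis by (simp add: indicator_def)
  qed
  moreover have "(\<integral>\<^sup>+x. ?G x \<partial>lborel) = (\<integral>\<^sup>+z. ?G (Q z) \<partial>lborel)"
    by (subst lborel_distr_orthogonal_transformation[OF Q(1), symmetric])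
      (simp add: nn_integral_distr)
  ultimately show ?thesis
    using nn_integral_punctured_ball_Basis[OF b0 _ g] dim by simp
qed

lemma nn_integral_sphere_inner:
  fixes \<mu> :: "real^'n"
  assumes \<mu>: "norm \<mu> = 1" and dim: "CARD('n) \<ge> 2"
  obtains c :: real where "0 < c"
    and "\<And>h. h \<in> borel_measurable borel \<Longrightarrow>
      (\<integral>\<^sup>+x. h (\<mu> \<bullet> x) \<partial>sphere_surface_measure) = ennreal c * sphere_marginal_integral CARD('n) h"
proof -
  define d where "d = CARD('n)"
  obtain b0 :: "real^'n" where b0: "b0 \<in> Basis" using nonempty_Basis by blast
  define C where "C = transverse_integral b0 1"
  have sphere: "(\<integral>\<^sup>+x. h (\<mu> \<bullet> x) \<partial>sphere_surface_measure) =
      ennreal (real d) * (C * sphere_marginal_integral d h)"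
    if [measurable]: "h \<in> borel_measurable borel" for h
  proof -
    have "(\<integral>\<^sup>+x. h (\<mu> \<bullet> x) \<partial>sphere_surface_measure) = ennreal (real d) *
        (\<integral>\<^sup>+x. indicator (ball 0 1 - {0}) x * h (\<mu> \<bullet> (x /\<^sub>R norm x)) \<partial>lborel)"
      unfolding d_def by (rule nn_integral_sphere_surface_measure[where 'a="real^'n", simplified]) measurable
    also have "(\<lambda>x::real^'n. \<mu> \<bullet> (x /\<^sub>R norm x)) = (\<lambda>x. (\<mu> \<bullet> x) / norm x)"
      by (simp add: fun_eq_iff divide_inverse mult.commute)
    finally show ?thesis
      by (simp add: nn_integral_punctured_ball_inner[OF \<mu> b0 dim] C_def d_def)
  qed
  txt \<open>The constant is identified through \<open>h = 1\<close>, for which the cone formula computes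
    the volume of the unit ball.\<close>
  define m where "m = 2 powr (real d - 2) * Beta ((real d - 1) / 2) ((real d - 1) / 2)"
  have m: "0 < m" using dim by (simp add: m_def d_def Beta_real_pos)
  have "emeasure lborel (ball 0 1 - {0::real^'n}) = emeasure lborel (ball (0::real^'n) 1)"
    by (rule emeasure_Diff_null_set) auto
  then have "ennreal (unit_ball_vol (real d)) = C * ennreal m"
    using nn_integral_punctured_ball_inner[OF \<mu> b0 dim, of "\<lambda>_. 1"] sphere_marginal_integral_1[OF dim]
    by (simp add: emeasure_ball C_def m_def d_def)
  then have "C = ennreal (unit_ball_vol (real d)) / ennreal m"
    using m by (simp add: ennreal_mult_divide_eq)
  then have C: "C = ennreal (unit_ball_vol (real d) / m)"
    using m by (simp add: divide_ennreal)
  show ?thesis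
  proof
    show "0 < real d * (unit_ball_vol (real d) / m)"
      using m dim by (simp add: d_def)
    show "(\<integral>\<^sup>+x. h (\<mu> \<bullet> x) \<partial>sphere_surface_measure) =
        ennreal (real d * (unit_ball_vol (real d) / m)) * sphere_marginal_integral CARD('n) h"
      if "h \<in> borel_measurable borel" for h
      using sphere[OF that] by (simp add: C d_def ennreal_mult'[symmetric] mult.assoc[symmetric])
  qed
qed

lemma ps_unnorm_nonneg: "0 \<le> ps_unnorm \<mu> \<kappa> x"
  by (simp add: ps_unnorm_def)

lemma nn_integral_ps_unnorm_inner_le:
  fixes \<mu> :: "real^'n" and \<kappa> :: real
  assumes dim: "CARD('n) \<ge> 2" and \<mu>: "norm \<mu> = 1" and \<kappa>: "0 \<le> \<kappa>"
  defines "\<alpha> \<equiv> (real CARD('n) - 1) / 2 + \<kappa>" and "\<beta> \<equiv> (real CARD('n) - 1) / 2"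
  obtains c :: real where "0 < c"
    and "\<And>t. -1 \<le> t \<Longrightarrow> t \<le> 1 \<Longrightarrow>
      (\<integral>\<^sup>+x. ennreal (ps_unnorm \<mu> \<kappa> x) * indicator {..t} (\<mu> \<bullet> x) \<partial>sphere_surface_measure) =
      ennreal (c * inc_beta ((t + 1) / 2) \<alpha> \<beta>)"
proof -
  have ab: "0 < \<alpha>" "0 < \<beta>" using dim \<kappa> by (simp_all add: \<alpha>_def \<beta>_def add_pos_nonneg)
  obtain c where c: "0 < c" and sphere: "\<And>h. h \<in> borel_measurable borel \<Longrightarrow>
      (\<integral>\<^sup>+x. h (\<mu> \<bullet> x) \<partial>sphere_surface_measure) = ennreal c * sphere_marginal_integral CARD('n) h"
    using nn_integral_sphere_inner[OF \<mu> dim] by blast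
  define K where "K = 2 powr (\<alpha> + \<beta> - 1) * Beta \<alpha> \<beta>"
  show ?thesis
  proof
    show "0 < c * K" using ab c by (simp add: K_def Beta_real_pos)
    fix t :: real
    assume t: "-1 \<le> t" "t \<le> 1"
    have "(\<integral>\<^sup>+x. ennreal (ps_unnorm \<mu> \<kappa> x) * indicator {..t} (\<mu> \<bullet> x) \<partial>sphere_surface_measure) =
        (\<integral>\<^sup>+x. (\<lambda>u. ennreal (if \<kappa> = 0 then 1 else (1 + u) powr \<kappa>) * indicator {..t} u) (\<mu> \<bullet> x)
          \<partial>sphere_surface_measure)"
      by (simp add: ps_unnorm_def)
    also have "\<dots> = ennreal c * sphere_marginal_integral CARD('n)
          (\<lambda>u. ennreal (if \<kappa> = 0 then 1 else (1 + u) powr \<kappa>) * indicator {..t} u)"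
      by (rule sphere) measurable
    also have "sphere_marginal_integral CARD('n)
        (\<lambda>u. ennreal (if \<kappa> = 0 then 1 else (1 + u) powr \<kappa>) * indicator {..t} u) =
        sphere_marginal_integral CARD('n) (\<lambda>u. ennreal ((1 + u) powr \<kappa>) * indicator {..t} u)"
      by (intro sphere_marginal_integral_cong) simp
    also have "\<dots> = ennreal (K * inc_beta ((t + 1) / 2) \<alpha> \<beta>)"
      using sphere_marginal_integral_Beta[OF dim \<kappa> t] by (simp add: K_def \<alpha>_def \<beta>_def)
    finally show "(\<integral>\<^sup>+x. ennreal (ps_unnorm \<mu> \<kappa> x) * indicator {..t} (\<mu> \<bullet> x) \<partial>sphere_surface_measure) =
        ennreal (c * K * inc_beta ((t + 1) / 2) \<alpha> \<beta>)"
      using c by (simp add: ennreal_mult'[symmetric] mult.assoc)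
  qed
qed

lemma power_spherical_inner_cdf:
  fixes \<mu> :: "real^'n" and \<kappa> t :: real
  assumes dim: "CARD('n) \<ge> 2" and \<mu>: "norm \<mu> = 1" and \<kappa>: "0 \<le> \<kappa>" and t: "-1 \<le> t" "t \<le> 1"
  defines "\<alpha> \<equiv> (real CARD('n) - 1) / 2 + \<kappa>" and "\<beta> \<equiv> (real CARD('n) - 1) / 2"
  shows "measure (power_spherical \<mu> \<kappa>) {x \<in> space (power_spherical \<mu> \<kappa>). \<mu> \<bullet> x \<le> t} =
    inc_beta ((t + 1) / 2) \<alpha> \<beta>"
proof -
  let ?\<sigma> = "sphere_surface_measure :: (real^'n) measure"
  have ab: "0 < \<alpha>" "0 < \<beta>" using dim \<kappa> by (simp_all add: \<alpha>_def \<beta>_def add_pos_nonneg)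
  obtain c where c: "0 < c" and sublevel: "\<And>s. -1 \<le> s \<Longrightarrow> s \<le> 1 \<Longrightarrow>
      (\<integral>\<^sup>+x. ennreal (ps_unnorm \<mu> \<kappa> x) * indicator {..s} (\<mu> \<bullet> x) \<partial>?\<sigma>) =
      ennreal (c * inc_beta ((s + 1) / 2) \<alpha> \<beta>)"
    using nn_integral_ps_unnorm_inner_le[OF dim \<mu> \<kappa>] unfolding \<alpha>_def \<beta>_def by blast
  have [measurable]: "ps_unnorm \<mu> \<kappa> \<in> borel_measurable ?\<sigma>" "(\<lambda>x. \<mu> \<bullet> x) \<in> borel_measurable ?\<sigma>"
    unfolding ps_unnorm_def by (intro measurable_sphere_surface_measure, measurable)+
  define Z where "Z = integral\<^sup>L ?\<sigma> (ps_unnorm \<mu> \<kappa>)"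
  have "\<mu> \<bullet> x \<le> 1" if "x \<in> space ?\<sigma>" for x
    using that norm_cauchy_schwarz[of \<mu> x] \<mu> by (simp add: space_sphere_surface_measure)
  then have "(\<integral>\<^sup>+x. ennreal (ps_unnorm \<mu> \<kappa> x) \<partial>?\<sigma>) =
      (\<integral>\<^sup>+x. ennreal (ps_unnorm \<mu> \<kappa> x) * indicator {..1} (\<mu> \<bullet> x) \<partial>?\<sigma>)"
    by (intro nn_integral_cong) simp
  moreover have "Z = enn2real (\<integral>\<^sup>+x. ennreal (ps_unnorm \<mu> \<kappa> x) \<partial>?\<sigma>)"
    unfolding Z_def by (rule integral_eq_nn_integral) (measurable, simp add: ps_unnorm_def)
  ultimately have Z: "Z = c"
    using sublevel[of 1] c by (simp add: inc_beta_1[OF ab])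
  have "emeasure (power_spherical \<mu> \<kappa>) {x \<in> space (power_spherical \<mu> \<kappa>). \<mu> \<bullet> x \<le> t} =
      (\<integral>\<^sup>+x. ennreal (1 / Z) * (ennreal (ps_unnorm \<mu> \<kappa> x) * indicator {..t} (\<mu> \<bullet> x)) \<partial>?\<sigma>)"
    unfolding power_spherical_def Z_def[symmetric]
  proof (subst emeasure_density)
    show "{x \<in> space (density ?\<sigma> (\<lambda>x. ennreal (ps_unnorm \<mu> \<kappa> x / Z))). \<mu> \<bullet> x \<le> t} \<in> sets ?\<sigma>"
      by (simp add: sets_sphere_surface_measure space_sphere_surface_measure sets_restrict_space_iff
          Collect_conj_eq[symmetric] borel_closed closed_halfspace_le) auto
  qed (auto intro!: nn_integral_cong simp: indicator_def space_sphere_surface_measure mult.commute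
      ennreal_divide_eq_mult[OF ps_unnorm_nonneg])
  also have "\<dots> = ennreal (inc_beta ((t + 1) / 2) \<alpha> \<beta>)"
    using Z c by (simp add: nn_integral_cmult sublevel[OF t] ennreal_mult'[symmetric])
  finally show ?thesis
    using inc_beta_nonneg[OF ab] t by (simp add: measure_def)
qed

theorem corollary2:
  fixes \<mu> :: "real ^ 'n" and \<kappa> :: real
  assumes "CARD('n) \<ge> 2" and "norm \<mu> = 1" and "\<kappa> \<ge> 0"
  defines "\<alpha> \<equiv> (real CARD('n) - 1) / 2 + \<kappa>"
      and "\<beta> \<equiv> (real CARD('n) - 1) / 2"
      and "F \<equiv> (\<lambda>t. measure (power_spherical \<mu> \<kappa>)
                     {x \<in> space (power_spherical \<mu> \<kappa>). \<mu> \<bullet> x \<le> t})"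
  shows "(\<forall>t \<in> {-1..1}. F t = inc_beta ((t + 1) / 2) \<alpha> \<beta>)
       \<and> (\<forall>y \<in> {0..1}.
            (\<exists>!x. x \<in> {0..1} \<and> inc_beta x \<alpha> \<beta> = y)
          \<and> (\<exists>!t. t \<in> {-1..1} \<and> F t = y)
          \<and> (THE t. t \<in> {-1..1} \<and> F t = y) = 2 * inc_beta_inv y \<alpha> \<beta> - 1)"
proof -
  have ab: "0 < \<alpha>" "0 < \<beta>" using assms(1,3) by (simp_all add: \<alpha>_def \<beta>_def add_pos_nonneg)
  have cdf: "F t = inc_beta ((t + 1) / 2) \<alpha> \<beta>" if "t \<in> {-1..1}" for t
    using power_spherical_inner_cdf[OF assms(1-3)] that by (simp add: F_def \<alpha>_def \<beta>_def)
  have quantile: "t \<in> {-1..1} \<and> F t = y \<longleftrightarrow> t = 2 * inc_beta_inv y \<alpha> \<beta> - 1"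
    if "y \<in> {0..1}" for y t
    using cdf[of t] inc_beta_inv_affine_iff[OF ab that, of t] by metis
  show ?thesis
  proof (intro conjI ballI)
    fix y :: real
    assume y: "y \<in> {0..1}"
    show "\<exists>!x. x \<in> {0..1} \<and> inc_beta x \<alpha> \<beta> = y" by (rule inc_beta_ex1[OF ab y])
    show "\<exists>!t. t \<in> {-1..1} \<and> F t = y" unfolding quantile[OF y] by simp
    show "(THE t. t \<in> {-1..1} \<and> F t = y) = 2 * inc_beta_inv y \<alpha> \<beta> - 1"
      unfolding quantile[OF y] by simp
  qed (rule cdf)
qed

end
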